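(* Let $n>s\ge1$ be integers, $t_0,\dots,t_s$ independent indeterminates, $g(x)=\sum_{k=0}^st_kx^k$, $B=(b_{ij})_{1\le i,j\le s}=M_s(g,g')$, and let $\bar B=(\bar b_{ij})_{1\le i,j\le s}$ with $$\bar b_{ij}=b_{ij}-\frac{(s-i+1)(s-j+1)}{n}\,t_{s-i+1}t_{s-j+1}.$$ Write the characteristic polynomial of $\bar B$ as $\det(xI_s-\bar B)=\sum_{k=0}^sh_{s-k}(t_0,\dots,t_s)x^{s-k}$. Then for every $k$ with $1\le k\le s$, $h_{s-k}(t_0,\dots,t_s)$ is a nonzero polynomial in $\mathbb{R}[t_0,\dots,t_s]$.
   Context: Bezoutian: for polynomials $f_1,f_2$ over a field $F$ of characteristic $0$ and an integer $n\ge\max\{\deg f_1,\deg f_2\}$, write $\frac{f_1(x)f_2(y)-f_1(y)f_2(x)}{x-y}=\sum_{i,j=1}^n\alpha_{ij}x^{n-i}y^{n-j}\in F[x,y]$ and set $M_n(f_1,f_2)=(\alpha_{ij})_{1\le i,j\le n}$; here $F=\mathbb{R}(t_0,\dots,t_s)$. *)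

theory Defs
  imports "HOL-Library.Poly_Mapping" "HOL-Computational_Algebra.Polynomial"
    "Jordan_Normal_Form.Char_Poly"
begin

text \<open>The polynomial ring R[t_0,...,t_s]: finitely supported maps from
  exponent vectors (nat =>0 nat) to real coefficients.\<close>
type_synonym mpoly = "(nat \<Rightarrow>\<^sub>0 nat) \<Rightarrow>\<^sub>0 real"

definition Var :: "nat \<Rightarrow> mpoly" where
  "Var k = Poly_Mapping.single (Poly_Mapping.single k 1) 1"

definition Const :: "real \<Rightarrow> mpoly" where
  "Const c = Poly_Mapping.single 0 c"

text \<open>Bivariate polynomials in x,y: outer variable x, inner variable y.
  The polynomial f1(x)f2(y) - f1(y)f2(x), and x - y.\<close>
definition bez_numer :: "'a::comm_ring_1 poly \<Rightarrow> 'a poly \<Rightarrow> 'a poly poly" where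
  "bez_numer f1 f2 =
     map_poly (\<lambda>c. [:c:]) f1 * [:f2:] - [:f1:] * map_poly (\<lambda>c. [:c:]) f2"

definition x_minus_y :: "'a::comm_ring_1 poly poly" where
  "x_minus_y = [: -[:0, 1:], 1 :]"

definition bez_quot :: "'a::comm_ring_1 poly \<Rightarrow> 'a poly \<Rightarrow> 'a poly poly" where
  "bez_quot f1 f2 = (THE q. q * x_minus_y = bez_numer f1 f2)"

text \<open>Bezoutian M_n(f1,f2) = (alpha_ij)_{1<=i,j<=n}, where alpha_ij is the
  coefficient of x^(n-i) y^(n-j); stored 0-based: entry (i,j) is alpha_(i+1)(j+1).\<close>
definition bezoutian :: "nat \<Rightarrow> 'a::comm_ring_1 poly \<Rightarrow> 'a poly \<Rightarrow> 'a mat" where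
  "bezoutian n f1 f2 =
     mat n n (\<lambda>(i, j). coeff (coeff (bez_quot f1 f2) (n - (i + 1))) (n - (j + 1)))"

definition gen_poly :: "nat \<Rightarrow> mpoly poly" where
  "gen_poly s = (\<Sum>k\<le>s. monom (Var k) k)"

text \<open>B-bar, 0-based: entry (i,j) is bbar_(i+1)(j+1) =
  b_(i+1)(j+1) - (s-i)(s-j)/n * t_(s-i) t_(s-j).\<close>
definition Bbar :: "nat \<Rightarrow> nat \<Rightarrow> mpoly mat" where
  "Bbar n s = mat s s (\<lambda>(i, j).
     bezoutian s (gen_poly s) (pderiv (gen_poly s)) $$ (i, j)
     - Const (real (s - i) * real (s - j) / real n) * Var (s - i) * Var (s - j))"

end

theory Submission
  imports Defs "HOL-Analysis.Convex"
begin

text \<open>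
  Specialise \<open>t\<^sub>k\<close> to the coefficients of \<open>g(x) = x(x - 1)\<cdots>(x - s + 1)\<close>. The Bezoutian of \<open>g\<close>
  and \<open>g'\<close> is then \<open>\<Sum>\<^sub>k q\<^sub>k(x) q\<^sub>k(y)\<close> with \<open>q\<^sub>k = g / (x - k)\<close>, so the quadratic form of the
  specialised \<open>B\<close>-bar at a vector \<open>a\<close> is \<open>\<Sum>\<^sub>k y\<^sub>k\<^sup>2 - (\<Sum>\<^sub>k y\<^sub>k)\<^sup>2 / n\<close>, where \<open>y\<^sub>k\<close> pairs \<open>a\<close>
  with the coefficients of \<open>q\<^sub>k\<close>. The \<open>q\<^sub>k\<close> span the polynomials of degree \<open>< s\<close> (Lagrange
  interpolation), so \<open>y \<noteq> 0\<close> for \<open>a \<noteq> 0\<close>, and Cauchy-Schwarz together with \<open>s < n\<close> makes the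
  form positive definite. Hence the specialised characteristic polynomial has only positive roots,
  its coefficients alternate strictly in sign, and none of them vanishes; a fortiori neither does the
  generic coefficient that is mapped to it.
\<close>

section \<open>Evaluating polynomials in poly-mapping form\<close>

definition monomial_value :: "('v \<Rightarrow> 'a::comm_semiring_1) \<Rightarrow> ('v \<Rightarrow>\<^sub>0 nat) \<Rightarrow> 'a" where
  "monomial_value x m = (\<Prod>v\<in>Poly_Mapping.keys m. x v ^ Poly_Mapping.lookup m v)"

definition insertion :: "('v \<Rightarrow> 'a::comm_semiring_1) \<Rightarrow> (('v \<Rightarrow>\<^sub>0 nat) \<Rightarrow>\<^sub>0 'a) \<Rightarrow> 'a" where
  "insertion x p = (\<Sum>m\<in>Poly_Mapping.keys p. Poly_Mapping.lookup p m * monomial_value x m)"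

lemma monomial_value_superset:
  assumes "finite S" "Poly_Mapping.keys m \<subseteq> S"
  shows "monomial_value x m = (\<Prod>v\<in>S. x v ^ Poly_Mapping.lookup m v)"
  unfolding monomial_value_def
  by (rule prod.mono_neutral_left) (use assms in \<open>auto simp: in_keys_iff\<close>)

lemma monomial_value_add: "monomial_value x (m + m') = monomial_value x m * monomial_value x m'"
proof -
  let ?S = "Poly_Mapping.keys m \<union> Poly_Mapping.keys m'"
  have "monomial_value x (m + m') = (\<Prod>v\<in>?S. x v ^ Poly_Mapping.lookup m v * x v ^ Poly_Mapping.lookup m' v)"
    by (subst monomial_value_superset[of ?S]) (auto simp: keys_add lookup_add power_add)
  also have "\<dots> = monomial_value x m * monomial_value x m'"
    by (simp add: prod.distrib monomial_value_superset[of ?S])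
  finally show ?thesis .
qed

lemma insertion_superset:
  assumes "finite S" "Poly_Mapping.keys p \<subseteq> S"
  shows "insertion x p = (\<Sum>m\<in>S. Poly_Mapping.lookup p m * monomial_value x m)"
  unfolding insertion_def
  by (rule sum.mono_neutral_left) (use assms in \<open>auto simp: in_keys_iff\<close>)

lemma insertion_add: "insertion x (p + q) = insertion x p + insertion x q"
proof -
  let ?S = "Poly_Mapping.keys p \<union> Poly_Mapping.keys q"
  have "insertion x (p + q)
      = (\<Sum>m\<in>?S. Poly_Mapping.lookup p m * monomial_value x m + Poly_Mapping.lookup q m * monomial_value x m)"
    by (subst insertion_superset[of ?S]) (auto simp: keys_add lookup_add distrib_right)
  also have "\<dots> = insertion x p + insertion x q"
    by (simp add: sum.distrib insertion_superset[of ?S])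
  finally show ?thesis .
qed

lemma insertion_zero [simp]: "insertion x 0 = 0"
  by (simp add: insertion_def)

lemma insertion_sum: "insertion x (sum f A) = (\<Sum>a\<in>A. insertion x (f a))"
  by (induction A rule: infinite_finite_induct) (auto simp: insertion_add)

lemma insertion_single [simp]:
  "insertion x (Poly_Mapping.single m c) = c * monomial_value x m"
  by (cases "c = 0") (auto simp: insertion_def)

lemma sum_single_lookup: "(\<Sum>m\<in>Poly_Mapping.keys p. Poly_Mapping.single m (Poly_Mapping.lookup p m)) = p"
  by (rule poly_mapping_eqI) (simp add: lookup_sum lookup_single when_def in_keys_iff sum.delta)

lemma insertion_mult: "insertion x (p * q) = insertion x p * insertion x q"
proof -
  have "p * q = (\<Sum>m\<in>Poly_Mapping.keys p. \<Sum>m'\<in>Poly_Mapping.keys q.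
      Poly_Mapping.single (m + m') (Poly_Mapping.lookup p m * Poly_Mapping.lookup q m'))"
    by (subst (1 2) sum_single_lookup[symmetric]) (simp only: sum_product mult_single)
  then have "insertion x (p * q) = (\<Sum>m\<in>Poly_Mapping.keys p. \<Sum>m'\<in>Poly_Mapping.keys q.
      Poly_Mapping.lookup p m * Poly_Mapping.lookup q m' * (monomial_value x m * monomial_value x m'))"
    by (simp only: insertion_sum insertion_single monomial_value_add)
  then show ?thesis
    unfolding insertion_def sum_product by (simp add: mult_ac)
qed

lemma comm_ring_hom_insertion: "comm_ring_hom (insertion (x :: 'v \<Rightarrow> 'a::comm_ring_1))"
  by unfold_locales
    (auto simp: insertion_add insertion_mult monomial_value_def simp flip: single_one)

lemma insertion_Var [simp]: "insertion x (Var k) = x k"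
  by (simp add: Var_def monomial_value_def)

lemma insertion_Const [simp]: "insertion x (Const c) = c"
  by (simp add: Const_def monomial_value_def)

section \<open>The Bezoutian quotient\<close>

text \<open>In \<open>bez_numer\<close> the outer variable is \<open>x\<close>: \<open>f(x)\<close> is \<open>lift_x f\<close> and \<open>f(y)\<close> is \<open>[:f:]\<close>.\<close>

abbreviation lift_x :: "'a::comm_ring_1 poly \<Rightarrow> 'a poly poly" where
  "lift_x \<equiv> map_poly (\<lambda>c. [:c:])"

lemma comm_ring_hom_const_poly: "comm_ring_hom (\<lambda>c::'a::comm_ring_1. [:c:])"
  by unfold_locales (auto simp: add_pCons[symmetric])

lemma mult_x_minus_y_cancel:
  fixes p q :: "'a::comm_ring_1 poly poly"
  assumes "p * x_minus_y = q * x_minus_y"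
  shows "p = q"
proof -
  have deg: "degree (x_minus_y :: 'a poly poly) = 1" and lc: "coeff (x_minus_y :: 'a poly poly) 1 = 1"
    by (simp_all add: x_minus_y_def)
  have "(p - q) * x_minus_y = 0"
    using assms by (simp add: left_diff_distrib)
  then have "lead_coeff (p - q) = 0"
    using coeff_mult_degree_sum[of "p - q" x_minus_y] deg lc by simp
  then have "p - q = 0" by (simp only: leading_coeff_0_iff)
  then show ?thesis by simp
qed

lemma bez_quot_correct: "bez_quot f1 f2 * x_minus_y = bez_numer f1 f2"
proof -
  have "poly (bez_numer f1 f2) [:0, 1:] = 0"
    by (simp add: bez_numer_def mult.commute flip: pcompose_altdef)
  then have "synthetic_div (bez_numer f1 f2) [:0, 1:] * x_minus_y = bez_numer f1 f2"
    using synthetic_div_correct'[of "[:0, 1:]" "bez_numer f1 f2"]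
    by (simp add: x_minus_y_def mult.commute)
  then have "\<exists>!q. q * x_minus_y = bez_numer f1 f2"
    by (metis mult_x_minus_y_cancel)
  then show ?thesis
    unfolding bez_quot_def by (rule theI')
qed

lemma bez_quot_eqI:
  assumes "q * x_minus_y = bez_numer f1 f2"
  shows "bez_quot f1 f2 = q"
  by (rule mult_x_minus_y_cancel) (simp add: bez_quot_correct assms)

lemma map_poly_bez_quot:
  assumes "comm_ring_hom h"
  shows "map_poly (map_poly h) (bez_quot f1 f2) = bez_quot (map_poly h f1) (map_poly h f2)"
proof (rule bez_quot_eqI[symmetric])
  interpret comm_ring_hom h by (fact assms)
  interpret h: map_poly_comm_ring_hom h ..
  interpret hh: map_poly_comm_ring_hom "map_poly h" ..
  have lift: "map_poly (map_poly h) (lift_x f) = lift_x (map_poly h f)" for f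
    by (rule poly_eqI) (simp add: coeff_map_poly map_poly_pCons_hom)
  have const: "map_poly (map_poly h) [:f:] = [:map_poly h f:]" for f
    by (rule poly_eqI) (simp add: coeff_map_poly coeff_pCons split: nat.split)
  have x_minus_y: "map_poly (map_poly h) x_minus_y = x_minus_y"
    by (simp add: x_minus_y_def hom_uminus)
  have "map_poly (map_poly h) (bez_quot f1 f2) * x_minus_y
      = map_poly (map_poly h) (bez_quot f1 f2 * x_minus_y)"
    by (simp only: hh.hom_mult x_minus_y)
  also have "\<dots> = bez_numer (map_poly h f1) (map_poly h f2)"
    unfolding bez_quot_correct bez_numer_def hh.hom_minus hh.hom_mult lift const ..
  finally show "map_poly (map_poly h) (bez_quot f1 f2) * x_minus_y = bez_numer (map_poly h f1) (map_poly h f2)" .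
qed

section \<open>Polynomials with simple roots and Lagrange interpolation\<close>

definition node_poly :: "(nat \<Rightarrow> 'a::comm_ring_1) \<Rightarrow> nat \<Rightarrow> 'a poly" where
  "node_poly r s = (\<Prod>k<s. [:- r k, 1:])"

definition node_quot :: "(nat \<Rightarrow> 'a::comm_ring_1) \<Rightarrow> nat \<Rightarrow> nat \<Rightarrow> 'a poly" where
  "node_quot r s k = (\<Prod>j\<in>{..<s} - {k}. [:- r j, 1:])"

lemma node_poly_eq_mult_node_quot: "k < s \<Longrightarrow> node_poly r s = [:- r k, 1:] * node_quot r s k"
  unfolding node_poly_def node_quot_def by (rule prod.remove) auto

lemma pderiv_node_poly: "pderiv (node_poly r s) = (\<Sum>k<s. node_quot r s k)"
  by (simp add: node_poly_def node_quot_def pderiv_prod pderiv_pCons)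

lemma degree_node_poly: "degree (node_poly r s) \<le> s"
proof -
  have "degree (node_poly r s) \<le> (\<Sum>k<s. degree [:- r k, 1:])"
    unfolding node_poly_def by (rule degree_prod_sum_le[unfolded o_def]) simp
  then show ?thesis by simp
qed

lemma degree_node_quot: "k < s \<Longrightarrow> degree (node_quot r s k) < s"
proof -
  assume "k < s"
  have "degree (node_quot r s k) \<le> (\<Sum>j\<in>{..<s} - {k}. degree [:- r j, 1:])"
    unfolding node_quot_def by (rule degree_prod_sum_le[unfolded o_def]) simp
  also have "\<dots> < s"
    using \<open>k < s\<close> by simp
  finally show ?thesis .
qed

lemma bez_quot_node_poly:
  "bez_quot (node_poly r s) (pderiv (node_poly r s)) = (\<Sum>k<s. lift_x (node_quot r s k) * [:node_quot r s k:])"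
proof (rule bez_quot_eqI)
  interpret x: map_poly_comm_ring_hom "\<lambda>c::'a. [:c:]"
    using comm_ring_hom_const_poly by (simp add: map_poly_comm_ring_hom_def)
  interpret y: comm_ring_hom "\<lambda>p::'a poly. [:p:]"
    by (rule comm_ring_hom_const_poly)
  have lift_x_minus_const: "lift_x [:- r k, 1:] - [:[:- r k, 1:]:] = x_minus_y" for k
    by (rule poly_eqI) (simp add: x_minus_y_def coeff_map_poly coeff_pCons split: nat.split)
  have factor: "A * B * Y - X * Y * B = (A - X) * (B * Y)" for A B X Y :: "'a poly poly"
    by (simp add: algebra_simps)
  have summand: "lift_x (node_poly r s) * [:node_quot r s k:] - [:node_poly r s:] * lift_x (node_quot r s k)
      = lift_x (node_quot r s k) * [:node_quot r s k:] * x_minus_y" if "k < s" for k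
    unfolding node_poly_eq_mult_node_quot[OF that] x.hom_mult y.hom_mult factor lift_x_minus_const
    by (simp only: mult_ac)
  have "bez_numer (node_poly r s) (pderiv (node_poly r s))
      = (\<Sum>k<s. lift_x (node_poly r s) * [:node_quot r s k:] - [:node_poly r s:] * lift_x (node_quot r s k))"
    by (simp add: bez_numer_def pderiv_node_poly x.hom_sum y.hom_sum sum_distrib_left sum_subtractf)
  also have "\<dots> = (\<Sum>k<s. lift_x (node_quot r s k) * [:node_quot r s k:]) * x_minus_y"
    unfolding sum_distrib_right by (rule sum.cong[OF refl], rule summand) simp
  finally show "(\<Sum>k<s. lift_x (node_quot r s k) * [:node_quot r s k:]) * x_minus_y
      = bez_numer (node_poly r s) (pderiv (node_poly r s))" ..
qed

lemma coeff_bez_quot_node_poly: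
  "coeff (coeff (bez_quot (node_poly r s) (pderiv (node_poly r s))) i) j
    = (\<Sum>k<s. coeff (node_quot r s k) i * coeff (node_quot r s k) j)"
proof -
  have "coeff (coeff (lift_x p * [:q:]) i) j = coeff p i * coeff q j" for p q :: "'a poly"
  proof -
    have "lift_x p * [:q:] = Polynomial.smult q (lift_x p)" by simp
    then show ?thesis
      by (simp add: coeff_map_poly coeff_pCons mult.commute split: nat.split)
  qed
  then show ?thesis
    by (simp add: bez_quot_node_poly coeff_sum)
qed

lemma poly_node_quot_other: "j < s \<Longrightarrow> j \<noteq> k \<Longrightarrow> poly (node_quot r s k) (r j) = 0"
  unfolding node_quot_def poly_prod by (rule prod_zero) auto

lemma poly_node_quot_self:
  fixes r :: "nat \<Rightarrow> 'a::idom"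
  assumes "inj_on r {..<s}" "k < s"
  shows "poly (node_quot r s k) (r k) \<noteq> 0"
  using assms unfolding node_quot_def poly_prod by (auto simp: inj_on_eq_iff)

lemma node_quot_interpolation:
  fixes r :: "nat \<Rightarrow> 'a::field"
  assumes inj: "inj_on r {..<s}" and deg: "degree f < s"
  shows "f = (\<Sum>k<s. Polynomial.smult (poly f (r k) / poly (node_quot r s k) (r k)) (node_quot r s k))"
    (is "f = ?g")
proof (rule poly_eqI_degree)
  show "poly f x = poly ?g x" if "x \<in> r ` {..<s}" for x
  proof -
    from that obtain j where j: "j < s" "x = r j" by auto
    have "poly ?g (r j) = (\<Sum>k\<in>{j}. poly f (r k) / poly (node_quot r s k) (r k) * poly (node_quot r s k) (r j))"
      unfolding poly_sum poly_smult
      by (rule sum.mono_neutral_right) (use j in \<open>auto simp: poly_node_quot_other\<close>)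
    then show ?thesis
      using j poly_node_quot_self[OF inj] by simp
  qed
  have card: "card (r ` {..<s}) = s"
    using inj by (simp add: card_image)
  show "degree f < card (r ` {..<s})"
    using deg card by simp
  show "degree ?g < card (r ` {..<s})"
    unfolding card using deg degree_node_quot
    by (intro degree_sum_less) (auto intro: le_less_trans[OF degree_smult_le])
qed

text \<open>Row \<open>i\<close> of a Bezoutian of size \<open>s\<close> belongs to \<open>x\<^bsup>s - 1 - i\<^esup>\<close>, so a vector \<open>a\<close> acts on
  polynomials of degree \<open>< s\<close> through this pairing.\<close>

definition coeff_pairing :: "nat \<Rightarrow> (nat \<Rightarrow> 'a::comm_semiring_1) \<Rightarrow> 'a poly \<Rightarrow> 'a" where
  "coeff_pairing s a f = (\<Sum>i<s. a i * coeff f (s - Suc i))"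

lemma coeff_pairing_sum: "coeff_pairing s a (sum f K) = (\<Sum>k\<in>K. coeff_pairing s a (f k))"
  unfolding coeff_pairing_def coeff_sum sum_distrib_left by (rule sum.swap)

lemma coeff_pairing_smult: "coeff_pairing s a (Polynomial.smult c f) = c * coeff_pairing s a f"
  by (simp add: coeff_pairing_def sum_distrib_left mult_ac)

lemma coeff_pairing_monom:
  assumes "i < s"
  shows "coeff_pairing s a (monom 1 (s - Suc i)) = a i"
proof -
  have "coeff_pairing s a (monom 1 (s - Suc i)) = (\<Sum>j<s. if j = i then a j else 0)"
    unfolding coeff_pairing_def by (rule sum.cong) (use assms in \<open>auto simp: coeff_monom\<close>)
  then show ?thesis
    using assms by simp
qed

lemma coeff_pairing_node_quot_nonzero:
  fixes r :: "nat \<Rightarrow> 'a::field"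
  assumes inj: "inj_on r {..<s}" and "i < s" "a i \<noteq> 0"
  shows "\<exists>k<s. coeff_pairing s a (node_quot r s k) \<noteq> 0"
proof (rule ccontr)
  assume all_zero: "\<not> ?thesis"
  define f :: "'a poly" where "f = monom 1 (s - Suc i)"
  have "degree f < s"
    using \<open>i < s\<close> by (simp add: f_def degree_monom_eq)
  then have "coeff_pairing s a f = 0"
    using all_zero
    by (subst node_quot_interpolation[OF inj]) (simp_all add: coeff_pairing_sum coeff_pairing_smult)
  moreover have "coeff_pairing s a f = a i"
    unfolding f_def using \<open>i < s\<close> by (rule coeff_pairing_monom)
  ultimately show False
    using \<open>a i \<noteq> 0\<close> by simp
qed

section \<open>Positive definite real symmetric matrices\<close>

definition quad_form :: "'a::comm_semiring_1 mat \<Rightarrow> (nat \<Rightarrow> 'a) \<Rightarrow> 'a" where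
  "quad_form A a = (\<Sum>i<dim_row A. \<Sum>j<dim_row A. a i * a j * A $$ (i, j))"

lemma hermitian_form_of_real:
  fixes A :: "real mat" and v :: "nat \<Rightarrow> complex"
  assumes A: "A \<in> carrier_mat s s" and sym: "A\<^sup>T = A"
  shows "(\<Sum>i<s. cnj (v i) * (\<Sum>j<s. complex_of_real (A $$ (i, j)) * v j))
    = complex_of_real (quad_form A (\<lambda>i. Re (v i)) + quad_form A (\<lambda>i. Im (v i)))"
proof (rule complex_eqI)
  have "A $$ (j, i) = A $$ (i, j)" if "i < s" "j < s" for i j
    using arg_cong[OF sym, of "\<lambda>B. B $$ (i, j)"] that A by auto
  then have "(\<Sum>i<s. \<Sum>j<s. A $$ (i, j) * (Re (v i) * Im (v j)))
      = (\<Sum>i<s. \<Sum>j<s. A $$ (i, j) * (Im (v i) * Re (v j)))"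
    by (subst sum.swap) (auto simp: mult_ac intro!: sum.cong)
  then show "Im (\<Sum>i<s. cnj (v i) * (\<Sum>j<s. complex_of_real (A $$ (i, j)) * v j))
      = Im (complex_of_real (quad_form A (\<lambda>i. Re (v i)) + quad_form A (\<lambda>i. Im (v i))))"
    by (simp add: Im_sum sum_distrib_left algebra_simps sum_subtractf)
  show "Re (\<Sum>i<s. cnj (v i) * (\<Sum>j<s. complex_of_real (A $$ (i, j)) * v j))
      = Re (complex_of_real (quad_form A (\<lambda>i. Re (v i)) + quad_form A (\<lambda>i. Im (v i))))"
    using A by (simp add: quad_form_def Re_sum sum_distrib_left algebra_simps sum.distrib)
qed

lemma eigenvalue_pos_def_pos_real:
  fixes A :: "real mat"
  assumes A: "A \<in> carrier_mat s s" and sym: "A\<^sup>T = A"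
    and pos_def: "\<And>a i. i < s \<Longrightarrow> a i \<noteq> 0 \<Longrightarrow> 0 < quad_form A a"
    and eigen: "eigenvalue (map_mat complex_of_real A) lam"
  shows "\<exists>r>0. lam = complex_of_real r"
proof -
  obtain v where v: "v \<in> carrier_vec s" "v \<noteq> 0\<^sub>v s" "map_mat complex_of_real A *\<^sub>v v = lam \<cdot>\<^sub>v v"
    using eigen A unfolding eigenvalue_def eigenvector_def by auto
  obtain i where i: "i < s" "v $ i \<noteq> 0"
    using v(1,2) by (metis carrier_vecD eq_vecI index_zero_vec)
  have nonneg: "0 \<le> quad_form A a" for a
  proof (cases "\<exists>i<s. a i \<noteq> 0")
    case True
    then show ?thesis using pos_def by (auto intro: less_imp_le)
  next
    case False
    then show ?thesis using A by (simp add: quad_form_def)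
  qed
  define Q where "Q = quad_form A (\<lambda>i. Re (v $ i)) + quad_form A (\<lambda>i. Im (v $ i))"
  have "0 < Q"
    using i pos_def[OF i(1)] nonneg unfolding Q_def
    by (cases "Re (v $ i) = 0") (auto simp: complex_eq_iff intro: add_pos_nonneg add_nonneg_pos)
  define N where "N = (\<Sum>i<s. (cmod (v $ i))\<^sup>2)"
  have "0 < N"
    unfolding N_def using i by (intro sum_pos2[of _ i]) auto
  have "lam * complex_of_real N = (\<Sum>i<s. cnj (v $ i) * (map_mat complex_of_real A *\<^sub>v v) $ i)"
    using v(1) unfolding v(3) N_def
    by (simp add: sum_distrib_left mult_ac flip: complex_norm_square)
  also have "\<dots> = complex_of_real Q"
    using hermitian_form_of_real[OF A sym, of "\<lambda>i. v $ i"] A v(1)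
    by (simp add: Q_def scalar_prod_def atLeast0LessThan)
  finally have "lam = complex_of_real (Q / N)"
    using \<open>0 < N\<close> by (simp add: field_simps)
  with \<open>0 < Q\<close> \<open>0 < N\<close> show ?thesis
    by (intro exI[of _ "Q / N"]) auto
qed

lemma coeff_prod_positive_roots_sign:
  fixes rs :: "real list"
  assumes "\<forall>r\<in>set rs. 0 < r" "j \<le> length rs"
  shows "0 < (-1) ^ (length rs - j) * coeff (\<Prod>r\<leftarrow>rs. [:- r, 1:]) j"
  using assms
proof (induction rs arbitrary: j)
  case Nil
  then show ?case by simp
next
  case (Cons r rs)
  let ?p = "\<Prod>r\<leftarrow>rs. [:- r, 1:]" and ?m = "length rs"
  have "0 < r" using Cons.prems by simp
  have pos: "0 < (-1) ^ (?m - i) * coeff ?p i" if "i \<le> ?m" for i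
    using Cons.IH Cons.prems that by simp
  have "degree ?p \<le> ?m"
    using degree_prod_list_le[of "map (\<lambda>r. [:- r, 1:]) rs"] by (simp add: o_def sum_list_triv)
  then have top: "coeff ?p (Suc ?m) = 0"
    by (simp add: coeff_eq_0)
  have coeff_Cons: "coeff (\<Prod>r\<leftarrow>r # rs. [:- r, 1:]) j = - r * coeff ?p j + (case j of 0 \<Rightarrow> 0 | Suc i \<Rightarrow> coeff ?p i)"
    by (simp add: coeff_pCons split: nat.split)
  consider "j = 0" | i where "j = Suc i" "i < ?m" | "j = Suc ?m"
    using Cons.prems(2) by (cases j) (auto simp: le_eq_less_or_eq)
  then show ?case
  proof cases
    case 1
    then show ?thesis
      using pos[of 0] \<open>0 < r\<close> by (simp add: coeff_Cons) (metis mult.left_commute mult_pos_pos)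
  next
    case (2 i)
    then have "?m - i = Suc (?m - j)" by simp
    then have sign: "(-1 :: real) ^ (?m - i) = - ((-1) ^ (?m - j))" by simp
    have "(-1) ^ (length (r # rs) - j) * coeff (\<Prod>r\<leftarrow>r # rs. [:- r, 1:]) j
        = r * ((-1) ^ (?m - j) * coeff ?p j) + (-1) ^ (?m - i) * coeff ?p i"
      using 2 by (simp add: coeff_Cons sign algebra_simps)
    also have "\<dots> > 0"
      using pos[of j] pos[of i] 2 \<open>0 < r\<close> by (simp add: add_pos_pos)
    finally show ?thesis .
  qed (use pos[of ?m] top in \<open>simp add: coeff_Cons\<close>)
qed

lemma coeff_char_poly_pos_def_nonzero:
  fixes A :: "real mat"
  assumes A: "A \<in> carrier_mat s s" and sym: "A\<^sup>T = A"
    and pos_def: "\<And>a i. i < s \<Longrightarrow> a i \<noteq> 0 \<Longrightarrow> 0 < quad_form A a"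
    and "j \<le> s"
  shows "coeff (char_poly A) j \<noteq> 0"
proof -
  interpret of_real: map_poly_inj_idom_hom complex_of_real ..
  let ?A = "map_mat complex_of_real A"
  obtain as where as: "char_poly ?A = (\<Prod>a\<leftarrow>as. [:- a, 1:])" "length as = s"
    using char_poly_factorized[of ?A s] A by auto
  have "\<exists>r>0. a = complex_of_real r" if "a \<in> set as" for a
  proof (rule eigenvalue_pos_def_pos_real[OF A sym pos_def])
    have "poly (char_poly ?A) a = 0"
      unfolding as(1) poly_prod_list using that by (induction as) auto
    then show "eigenvalue ?A a"
      using eigenvalue_root_char_poly[of ?A s] A by simp
  qed
  then have real: "complex_of_real (Re a) = a" and pos: "0 < Re a" if "a \<in> set as" for a
    using that by force+
  define rs where "rs = map Re as"
  have rs: "as = map complex_of_real rs" "\<forall>r\<in>set rs. 0 < r"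
    using real pos by (auto simp: rs_def o_def intro: map_idI[symmetric])
  have "map_poly complex_of_real (char_poly A) = map_poly complex_of_real (\<Prod>r\<leftarrow>rs. [:- r, 1:])"
    unfolding of_real_hom.char_poly_hom[OF A, symmetric] as(1) rs(1)
    by (simp add: of_real.hom_prod_list o_def of_real_hom.map_poly_pCons_hom)
  then have "char_poly A = (\<Prod>r\<leftarrow>rs. [:- r, 1:])"
    by simp
  moreover have "length rs = s"
    using as(2) rs(1) by simp
  ultimately show ?thesis
    using coeff_prod_positive_roots_sign[OF rs(2), of j] \<open>j \<le> s\<close> by auto
qed

section \<open>Specialising at the nodes \<open>0, \<dots>, s - 1\<close>\<close>

lemma map_poly_insertion_gen_poly:
  fixes p :: "real poly"
  assumes "degree p \<le> s"
  shows "map_poly (insertion (coeff p)) (gen_poly s) = p"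
proof (rule poly_eqI)
  interpret comm_ring_hom "insertion (coeff p)"
    by (rule comm_ring_hom_insertion)
  fix i
  have "coeff (gen_poly s) i = (if i \<le> s then Var i else 0)"
    unfolding gen_poly_def coeff_sum coeff_monom by (simp add: sum.delta)
  then show "coeff (map_poly (insertion (coeff p)) (gen_poly s)) i = coeff p i"
    using assms by (auto simp: coeff_map_poly coeff_eq_0)
qed

lemma map_mat_insertion_Bbar:
  fixes p :: "real poly"
  assumes "degree p \<le> s"
  shows "map_mat (insertion (coeff p)) (Bbar n s) = mat s s (\<lambda>(i, j).
    coeff (coeff (bez_quot p (pderiv p)) (s - Suc i)) (s - Suc j)
    - real (s - i) * real (s - j) / real n * coeff p (s - i) * coeff p (s - j))"
proof -
  interpret idom_hom "insertion (coeff p)"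
    unfolding idom_hom_def by (rule comm_ring_hom_insertion)
  have bez: "map_poly (map_poly (insertion (coeff p))) (bez_quot (gen_poly s) (pderiv (gen_poly s)))
      = bez_quot p (pderiv p)"
    by (simp add: map_poly_bez_quot comm_ring_hom_insertion map_poly_pderiv
        map_poly_insertion_gen_poly[OF assms])
  have "insertion (coeff p) (coeff (coeff (bez_quot (gen_poly s) (pderiv (gen_poly s))) a) b)
      = coeff (coeff (bez_quot p (pderiv p)) a) b" for a b
    by (simp add: coeff_map_poly flip: bez)
  then show ?thesis
    by (intro eq_matI) (auto simp: Bbar_def bezoutian_def hom_distribs)
qed

lemma quad_form_gram_minus_rank_one:
  fixes A :: "'a::comm_ring_1 mat"
  assumes "A \<in> carrier_mat s s"
    and entries: "\<And>i j. i < s \<Longrightarrow> j < s \<Longrightarrow> A $$ (i, j) = (\<Sum>k\<in>K. w k i * w k j) - c * v i * v j"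
  shows "quad_form A a = (\<Sum>k\<in>K. (\<Sum>i<s. a i * w k i)\<^sup>2) - c * (\<Sum>i<s. a i * v i)\<^sup>2"
proof -
  have dim: "dim_row A = s"
    using assms(1) by simp
  have "quad_form A a = (\<Sum>i<s. \<Sum>j<s. (\<Sum>k\<in>K. (a i * w k i) * (a j * w k j)) - c * ((a i * v i) * (a j * v j)))"
    unfolding quad_form_def dim
    by (intro sum.cong refl) (simp add: entries sum_distrib_left algebra_simps)
  also have "\<dots> = (\<Sum>k\<in>K. \<Sum>i<s. \<Sum>j<s. (a i * w k i) * (a j * w k j)) - c * (\<Sum>i<s. \<Sum>j<s. (a i * v i) * (a j * v j))"
    by (simp add: sum_subtractf sum_distrib_left sum.swap[of _ K])
  finally show ?thesis
    by (simp add: power2_eq_square sum_product)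
qed

lemma sum_square_div_less_sum_squares:
  fixes y :: "'b \<Rightarrow> real"
  assumes "finite K" "card K < n" "k \<in> K" "y k \<noteq> 0"
  shows "(\<Sum>k\<in>K. y k)\<^sup>2 / real n < (\<Sum>k\<in>K. (y k)\<^sup>2)"
proof -
  have "0 < (\<Sum>k\<in>K. (y k)\<^sup>2)"
    using assms by (intro sum_pos2[of _ k]) auto
  have "(\<Sum>k\<in>K. y k)\<^sup>2 \<le> (\<Sum>k\<in>K. (y k)\<^sup>2) * real (card K)"
    by (rule sum_squared_le_sum_of_squares)
  also have "\<dots> < (\<Sum>k\<in>K. (y k)\<^sup>2) * real n"
    using \<open>0 < (\<Sum>k\<in>K. (y k)\<^sup>2)\<close> \<open>card K < n\<close> by simp
  finally show ?thesis
    using \<open>card K < n\<close> by (simp add: divide_less_eq)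
qed

text \<open>Since \<open>(s - i) t\<^bsub>s-i\<^esub>\<close> is the coefficient of \<open>x\<^bsup>s - 1 - i\<^esup>\<close> in \<open>g'\<close>, the correction
  term of \<open>Bbar\<close> becomes a rank-one matrix built from the coefficients of \<open>g'\<close>.\<close>

lemma Bbar_at_nodes_entry:
  assumes "i < s" "j < s"
  shows "map_mat (insertion (coeff (node_poly of_nat s))) (Bbar n s) $$ (i, j)
    = (\<Sum>k<s. coeff (node_quot of_nat s k) (s - Suc i) * coeff (node_quot of_nat s k) (s - Suc j))
      - 1 / real n * coeff (pderiv (node_poly of_nat s)) (s - Suc i) * coeff (pderiv (node_poly of_nat s)) (s - Suc j)"
proof -
  have pderiv: "coeff (pderiv (node_poly of_nat s)) (s - Suc m) = real (s - m) * coeff (node_poly of_nat s) (s - m)"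
    if "m < s" for m
    using that by (simp add: coeff_pderiv Suc_diff_Suc)
  show ?thesis
    using assms
    by (simp add: map_mat_insertion_Bbar[OF degree_node_poly] coeff_bez_quot_node_poly pderiv)
qed

lemma Bbar_at_nodes_carrier:
  "map_mat (insertion (coeff (node_poly of_nat s))) (Bbar n s) \<in> carrier_mat s s"
  by (simp add: Bbar_def)

lemma Bbar_at_nodes_symmetric:
  "(map_mat (insertion (coeff (node_poly of_nat s))) (Bbar n s))\<^sup>T
    = map_mat (insertion (coeff (node_poly of_nat s))) (Bbar n s)"
    (is "?A\<^sup>T = ?A")
proof (rule eq_matI)
  fix i j
  assume "i < dim_row ?A" "j < dim_col ?A"
  then have ij: "i < s" "j < s"
    using Bbar_at_nodes_carrier[of s n] by auto
  then have "?A\<^sup>T $$ (i, j) = ?A $$ (j, i)"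
    using Bbar_at_nodes_carrier[of s n] by simp
  also have "\<dots> = ?A $$ (i, j)"
    unfolding Bbar_at_nodes_entry[OF ij] Bbar_at_nodes_entry[OF ij(2,1)] by (simp add: mult_ac)
  finally show "?A\<^sup>T $$ (i, j) = ?A $$ (i, j)" .
qed (use Bbar_at_nodes_carrier[of s n] in auto)

lemma quad_form_Bbar_at_nodes:
  "quad_form (map_mat (insertion (coeff (node_poly of_nat s))) (Bbar n s)) a
    = (\<Sum>k<s. (coeff_pairing s a (node_quot of_nat s k))\<^sup>2)
      - (\<Sum>k<s. coeff_pairing s a (node_quot of_nat s k))\<^sup>2 / real n"
proof -
  have "quad_form (map_mat (insertion (coeff (node_poly of_nat s))) (Bbar n s)) a
    = (\<Sum>k<s. (coeff_pairing s a (node_quot of_nat s k))\<^sup>2)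
      - 1 / real n * (coeff_pairing s a (pderiv (node_poly of_nat s)))\<^sup>2"
    unfolding coeff_pairing_def
    by (rule quad_form_gram_minus_rank_one[OF Bbar_at_nodes_carrier Bbar_at_nodes_entry])
  also have "coeff_pairing s a (pderiv (node_poly of_nat s)) = (\<Sum>k<s. coeff_pairing s a (node_quot of_nat s k))"
    by (simp add: pderiv_node_poly coeff_pairing_sum)
  finally show ?thesis
    by simp
qed

lemma quad_form_Bbar_at_nodes_pos:
  assumes "s < n" "i < s" "a i \<noteq> 0"
  shows "0 < quad_form (map_mat (insertion (coeff (node_poly of_nat s))) (Bbar n s)) a"
proof -
  have "inj_on (of_nat :: nat \<Rightarrow> real) {..<s}"
    by (simp add: inj_on_def)
  with assms obtain k where "k < s" "coeff_pairing s a (node_quot of_nat s k) \<noteq> 0"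
    using coeff_pairing_node_quot_nonzero by blast
  then show ?thesis
    using sum_square_div_less_sum_squares[of "{..<s}" n k] \<open>s < n\<close>
    by (simp add: quad_form_Bbar_at_nodes)
qed

theorem lemma5p3:
  fixes n s :: nat
  assumes "1 \<le> s" and "s < n"
  shows "\<forall>k\<in>{1..s}. coeff (char_poly (Bbar n s)) (s - k) \<noteq> 0"
proof
  \<comment> \<open>Every coefficient is nonzero.\<close>
  fix k
  let ?eval = "insertion (coeff (node_poly of_nat s :: real poly))"
  interpret comm_ring_hom ?eval
    by (rule comm_ring_hom_insertion)
  have Bbar: "Bbar n s \<in> carrier_mat s s"
    by (simp add: Bbar_def)
  have "coeff (char_poly (map_mat ?eval (Bbar n s))) (s - k) \<noteq> 0"
    using Bbar \<open>s < n\<close>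
    by (intro coeff_char_poly_pos_def_nonzero Bbar_at_nodes_symmetric quad_form_Bbar_at_nodes_pos) auto
  then show "coeff (char_poly (Bbar n s)) (s - k) \<noteq> 0"
    by (auto simp: char_poly_hom[OF Bbar] coeff_map_poly)
qed

end
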